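(* At each $t$ where $g(t)=S(t)^{-1}\bar S(t)$, the matrix $J=S\Upsilon_1S^{-1}$ satisfies, for every $j\ge1$, $$J^j=\sum_{a=1}^{p_1}L_a^j=\sum_{b=1}^{p_2}\bar L_b^j,$$ and $J^j\mathcal A_{a'}=x^j\mathcal A_{a'}$, $(J^j)^\top\bar{\mathcal A}_{b'}=x^j\bar{\mathcal A}_{b'}$ for $a'=1,\dots,p_1$, $b'=1,\dots,p_2$.
   Context: $\mu$ finite Borel measure on an interval; weights $w_{1,a}$ ($a\le p_1$), $w_{2,b}$ ($b\le p_2$); compositions $\vec n_\ell\in\mathbb N^{p_\ell}$; each $i\in\mathbb Z_+$ is uniquely $i=q|\vec n_\ell|+n_{\ell,1}+\dots+n_{\ell,a-1}+r$ ($0\le r<n_{\ell,a}$), $a_\ell(i)=a$, $k_\ell(i)=qn_{\ell,a}+r$; moment matrix $g_{i,j}=\int x^{k_1(i)+k_2(j)}w_{1,a_1(i)}w_{2,a_2(j)}d\mu$. $e_{\ell,a}(k)=e_i$ with $a_\ell(i)=a,k_\ell(i)=k$; $\Lambda_{\ell,a}=\sum_ke_{\ell,a}(k)e_{\ell,a}(k+1)^\top$, $\Upsilon_\ell=\sum_a\Lambda_{\ell,a}$; $\chi_{\ell,a}(x)=\sum_ke_{\ell,a}(k)x^k$. Real times $t=(t_{j,a},\bar t_{j,b})$; $W_0(t)=\exp(\sum_{a,j}t_{j,a}\Lambda_{1,a}^j)$, $\bar W_0(t)=\exp(\sum_{b,j}\bar t_{j,b}(\Lambda_{2,b}^\top)^j)$,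 $g(t)=W_0(t)g\bar W_0(t)^{-1}$ (integrals assumed convergent), factorized as $g(t)=S(t)^{-1}\bar S(t)$ with $S$ unit lower triangular and $\bar S$ upper triangular invertible. $L_a=S\Lambda_{1,a}S^{-1}$, $\bar L_b=\bar S\Lambda_{2,b}^\top\bar S^{-1}$, $\mathcal A_a=S\chi_{1,a}(x)$, $\bar{\mathcal A}_b=(\bar S^{-1})^\top\chi_{2,b}(x)$. *)

theory Defs
  imports "HOL-Analysis.Analysis"
begin

text \<open>Products are entrywise (unconditional) infinite sums; in all products
  occurring in the statement only finitely many terms are nonzero.\<close>

type_synonym smat = "nat \<Rightarrow> nat \<Rightarrow> real"
type_synonym svec = "nat \<Rightarrow> real"

definition mmul :: "smat \<Rightarrow> smat \<Rightarrow> smat" where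
  "mmul A B = (\<lambda>i j. infsum (\<lambda>k. A i k * B k j) UNIV)"

definition mvmul :: "smat \<Rightarrow> svec \<Rightarrow> svec" where
  "mvmul A v = (\<lambda>i. infsum (\<lambda>k. A i k * v k) UNIV)"

definition mtrans :: "smat \<Rightarrow> smat" where
  "mtrans A = (\<lambda>i j. A j i)"

definition mid :: smat where
  "mid = (\<lambda>i j. if i = j then 1 else 0)"

primrec mpow :: "smat \<Rightarrow> nat \<Rightarrow> smat" where
  "mpow A 0 = mid"
| "mpow A (Suc m) = mmul (mpow A m) A"

definition minv :: "smat \<Rightarrow> smat" where
  "minv A = (THE X. mmul A X = mid \<and> mmul X A = mid)"

definition mexp :: "smat \<Rightarrow> smat" where
  "mexp X = (\<lambda>i j. infsum (\<lambda>m. mpow X m i j / fact m) UNIV)"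

text \<open>Compositions \<open>n\<close> with \<open>p\<close> parts \<open>n 1, ..., n p\<close>; \<open>|n|\<close>.\<close>
definition cnorm :: "nat \<Rightarrow> (nat \<Rightarrow> nat) \<Rightarrow> nat" where
  "cnorm p n = (\<Sum>c=1..p. n c)"

text \<open>Writing \<open>i = q|n| + n_1 + ... + n_(a-1) + r\<close> with \<open>0 \<le> r < n_a\<close>:
  \<open>aidx i = a\<close> and \<open>kidx i = q n_a + r\<close>.\<close>
definition aidx :: "nat \<Rightarrow> (nat \<Rightarrow> nat) \<Rightarrow> nat \<Rightarrow> nat" where
  "aidx p n i = (LEAST a. i mod cnorm p n < (\<Sum>c=1..a. n c))"

definition kidx :: "nat \<Rightarrow> (nat \<Rightarrow> nat) \<Rightarrow> nat \<Rightarrow> nat" where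
  "kidx p n i = (i div cnorm p n) * n (aidx p n i)
                 + (i mod cnorm p n - (\<Sum>c=1..<aidx p n i. n c))"

definition Lam :: "nat \<Rightarrow> (nat \<Rightarrow> nat) \<Rightarrow> nat \<Rightarrow> smat" where
  "Lam p n a = (\<lambda>i j. if aidx p n i = a \<and> aidx p n j = a \<and> kidx p n j = kidx p n i + 1
                       then 1 else 0)"

definition Ups :: "nat \<Rightarrow> (nat \<Rightarrow> nat) \<Rightarrow> smat" where
  "Ups p n = (\<lambda>i j. \<Sum>a=1..p. Lam p n a i j)"

definition chi :: "nat \<Rightarrow> (nat \<Rightarrow> nat) \<Rightarrow> nat \<Rightarrow> real \<Rightarrow> svec" where
  "chi p n a x = (\<lambda>i. if aidx p n i = a then x ^ kidx p n i else 0)"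

definition gmom :: "real measure \<Rightarrow> (nat \<Rightarrow> real \<Rightarrow> real) \<Rightarrow> (nat \<Rightarrow> real \<Rightarrow> real)
    \<Rightarrow> nat \<Rightarrow> (nat \<Rightarrow> nat) \<Rightarrow> nat \<Rightarrow> (nat \<Rightarrow> nat) \<Rightarrow> smat" where
  "gmom M w1 w2 p1 n1 p2 n2 = (\<lambda>i j.
     integral\<^sup>L M (\<lambda>x. x ^ (kidx p1 n1 i + kidx p2 n2 j)
                        * w1 (aidx p1 n1 i) x * w2 (aidx p2 n2 j) x))"

definition W0 :: "nat \<Rightarrow> (nat \<Rightarrow> nat) \<Rightarrow> (nat \<Rightarrow> nat \<Rightarrow> real) \<Rightarrow> smat" where
  "W0 p n t = mexp (\<lambda>i k. \<Sum>a=1..p. infsum (\<lambda>j. t j a * mpow (Lam p n a) j i k) {1..})"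

definition W0bar :: "nat \<Rightarrow> (nat \<Rightarrow> nat) \<Rightarrow> (nat \<Rightarrow> nat \<Rightarrow> real) \<Rightarrow> smat" where
  "W0bar p n tb = mexp (\<lambda>i k. \<Sum>b=1..p. infsum (\<lambda>j. tb j b * mpow (mtrans (Lam p n b)) j i k) {1..})"

end

theory Submission
  imports Defs
begin

text \<open>Both \<open>\<Upsilon>\<^sub>1\<close> and \<open>\<Upsilon>\<^sub>2\<close> are matrices of injective shifts of the index set. \<open>\<Upsilon>\<^sub>1\<close> commutes with
  \<open>W\<^sub>0\<close>, a power series in the \<open>\<Lambda>\<^sub>1\<^sub>,\<^sub>a\<close>; \<open>\<Upsilon>\<^sub>2\<^sup>T\<close> commutes with \<open>W\<^sub>0bar\<close> and hence with its
  inverse; and \<open>\<Upsilon>\<^sub>1 g = g \<Upsilon>\<^sub>2\<^sup>T\<close> because the moments depend only on \<open>k\<^sub>1(i) + k\<^sub>2(j)\<close>. Thus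
  \<open>\<Upsilon>\<^sub>1\<close> intertwines \<open>S\<^sup>-\<^sup>1 Sbar\<close> with \<open>\<Upsilon>\<^sub>2\<^sup>T\<close>, which says exactly
  \<open>J = S \<Upsilon>\<^sub>1 S\<^sup>-\<^sup>1 = Sbar \<Upsilon>\<^sub>2\<^sup>T Sbar\<^sup>-\<^sup>1\<close>. As the \<open>\<Lambda>\<^sub>a\<close> are mutually orthogonal and sum to \<open>\<Upsilon>\<close>, powers
  of any conjugate of \<open>\<Upsilon>\<close> split into sums of powers of the conjugated \<open>\<Lambda>\<^sub>a\<close>; and \<open>\<chi>\<^sub>a(x)\<close> is an
  eigenvector of \<open>\<Upsilon>\<close> with eigenvalue \<open>x\<close>, which conjugation transports to \<open>J\<close>.

  Infinite matrix products are only associative with care: every product rearranged below has a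
  row-finite left factor, a column-finite right factor, or a shift in the middle, or is covered by
  the summability hypotheses.\<close>

lemma has_sum_sum:
  fixes f :: "'i \<Rightarrow> 'a \<Rightarrow> 'b::topological_comm_monoid_add"
  assumes "finite I" "\<And>i. i \<in> I \<Longrightarrow> (f i has_sum s i) A"
  shows "((\<lambda>x. \<Sum>i\<in>I. f i x) has_sum (\<Sum>i\<in>I. s i)) A"
  using assms by (induction I rule: finite_induct) (auto intro: has_sum_add)

lemma infsum_sum:
  fixes f :: "'i \<Rightarrow> 'a \<Rightarrow> 'b::{topological_comm_monoid_add, t2_space}"
  assumes "finite I" "\<And>i. i \<in> I \<Longrightarrow> f i summable_on A"
  shows "infsum (\<lambda>x. \<Sum>i\<in>I. f i x) A = (\<Sum>i\<in>I. infsum (f i) A)"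
  by (rule infsumI, rule has_sum_sum) (use assms in auto)

lemma has_sum_finite_support:
  fixes f :: "'a \<Rightarrow> 'b::topological_comm_monoid_add"
  assumes "finite K" "\<And>k. k \<notin> K \<Longrightarrow> f k = 0"
  shows "(f has_sum sum f K) UNIV"
  by (rule has_sum_finite_neutralI[of K]) (use assms in auto)

lemma infsum_finite_support:
  fixes f :: "'a \<Rightarrow> 'b::{topological_comm_monoid_add, t2_space}"
  assumes "finite K" "\<And>k. k \<notin> K \<Longrightarrow> f k = 0"
  shows "infsum f UNIV = sum f K"
  using has_sum_finite_support[OF assms] by (rule infsumI)

lemma summable_on_finite_support:
  fixes f :: "'a \<Rightarrow> 'b::topological_comm_monoid_add"
  assumes "finite {k. f k \<noteq> 0}"
  shows "f summable_on UNIV"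
  using has_sum_finite_support[OF assms] by (auto simp: summable_on_def)

section \<open>Row- and column-finite matrices\<close>

definition row_finite :: "smat \<Rightarrow> bool" where
  "row_finite A \<longleftrightarrow> (\<forall>i. finite {k. A i k \<noteq> 0})"

definition col_finite :: "smat \<Rightarrow> bool" where
  "col_finite A \<longleftrightarrow> (\<forall>j. finite {k. A k j \<noteq> 0})"

definition mzero :: smat where
  "mzero = (\<lambda>i j. 0)"

definition msum :: "'i set \<Rightarrow> ('i \<Rightarrow> smat) \<Rightarrow> smat" where
  "msum K F = (\<lambda>i j. \<Sum>a\<in>K. F a i j)"

definition mscale :: "real \<Rightarrow> smat \<Rightarrow> smat" where
  "mscale c A = (\<lambda>i j. c * A i j)"

definition colmat :: "svec \<Rightarrow> smat" where
  "colmat v = (\<lambda>k j. v k)"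

lemma mmul_nonzero_imp: "mmul A B i j \<noteq> 0 \<Longrightarrow> \<exists>k. A i k \<noteq> 0 \<and> B k j \<noteq> 0"
  unfolding mmul_def by (metis (mono_tags, lifting) infsum_0 mult_eq_0_iff)

lemma mmul_assoc_at_finite_row:
  assumes fin: "finite {k. A i k \<noteq> 0}"
    and sm: "\<And>k. (\<lambda>l. B k l * C l j) summable_on UNIV"
  shows "mmul (mmul A B) C i j = mmul A (mmul B C) i j"
proof -
  define K where "K = {k. A i k \<noteq> 0}"
  have row: "mmul A X i l = (\<Sum>k\<in>K. A i k * X k l)" for X l
    unfolding mmul_def by (rule infsum_finite_support) (use fin K_def in auto)
  have "mmul (mmul A B) C i j = infsum (\<lambda>l. \<Sum>k\<in>K. A i k * (B k l * C l j)) UNIV"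
    unfolding mmul_def[of "mmul A B"] row by (simp add: sum_distrib_right mult.assoc)
  also have "\<dots> = (\<Sum>k\<in>K. A i k * mmul B C k j)"
    using fin sm by (simp add: infsum_sum summable_on_cmult_right infsum_cmult_right' mmul_def K_def)
  also have "\<dots> = mmul A (mmul B C) i j"
    by (simp add: row)
  finally show ?thesis .
qed

lemma mmul_assoc_at_finite_col:
  assumes fin: "finite {l. C l j \<noteq> 0}"
    and sm: "\<And>l. (\<lambda>k. A i k * B k l) summable_on UNIV"
  shows "mmul (mmul A B) C i j = mmul A (mmul B C) i j"
proof -
  define L where "L = {l. C l j \<noteq> 0}"
  have col: "mmul X C k j = (\<Sum>l\<in>L. X k l * C l j)" for X k
    unfolding mmul_def by (rule infsum_finite_support) (use fin L_def in auto)
  have "mmul A (mmul B C) i j = infsum (\<lambda>k. \<Sum>l\<in>L. (A i k * B k l) * C l j) UNIV"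
    unfolding mmul_def[of A] col by (simp add: sum_distrib_left mult.assoc)
  also have "\<dots> = (\<Sum>l\<in>L. mmul A B i l * C l j)"
    using fin sm by (simp add: infsum_sum summable_on_cmult_left infsum_cmult_left' mmul_def L_def)
  also have "\<dots> = mmul (mmul A B) C i j"
    by (simp add: col)
  finally show ?thesis by simp
qed

lemma summable_on_row_finite: "row_finite B \<Longrightarrow> (\<lambda>l. B k l * C l j) summable_on UNIV"
  by (rule summable_on_finite_support, rule finite_subset[of _ "{l. B k l \<noteq> 0}"])
    (auto simp: row_finite_def)

lemma summable_on_col_finite: "col_finite C \<Longrightarrow> (\<lambda>l. B k l * C l j) summable_on UNIV"
  by (rule summable_on_finite_support, rule finite_subset[of _ "{l. C l j \<noteq> 0}"])
    (auto simp: col_finite_def)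

lemma mmul_assoc_row_finite:
  "row_finite A \<Longrightarrow> row_finite B \<Longrightarrow> mmul (mmul A B) C = mmul A (mmul B C)"
  by (intro ext mmul_assoc_at_finite_row) (auto simp: row_finite_def intro: summable_on_row_finite)

lemma mmul_assoc_row_col_finite:
  "row_finite A \<Longrightarrow> col_finite C \<Longrightarrow> mmul (mmul A B) C = mmul A (mmul B C)"
  by (intro ext mmul_assoc_at_finite_row) (auto simp: row_finite_def intro: summable_on_col_finite)

lemma mmul_assoc_col_finite:
  "col_finite B \<Longrightarrow> col_finite C \<Longrightarrow> mmul (mmul A B) C = mmul A (mmul B C)"
  by (intro ext mmul_assoc_at_finite_col) (auto simp: col_finite_def intro: summable_on_col_finite)

lemma mmul_mid_left [simp]: "mmul mid A = A"
proof (intro ext)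
  fix i j
  have "mmul mid A i j = (\<Sum>k\<in>{i}. mid i k * A k j)"
    unfolding mmul_def by (rule infsum_finite_support) (auto simp: mid_def)
  then show "mmul mid A i j = A i j" by (simp add: mid_def)
qed

lemma mmul_mid_right [simp]: "mmul A mid = A"
proof (intro ext)
  fix i j
  have "mmul A mid i j = (\<Sum>k\<in>{j}. A i k * mid k j)"
    unfolding mmul_def by (rule infsum_finite_support) (auto simp: mid_def)
  then show "mmul A mid i j = A i j" by (simp add: mid_def)
qed

lemma mmul_mzero_left [simp]: "mmul mzero A = mzero"
  by (simp add: mmul_def mzero_def)

lemma mmul_mzero_right [simp]: "mmul A mzero = mzero"
  by (simp add: mmul_def mzero_def)

lemma mmul_mscale_right: "mmul A (mscale c B) = mscale c (mmul A B)"
  by (simp add: mmul_def mscale_def mult.left_commute infsum_cmult_right')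

lemma mtrans_mmul: "mtrans (mmul A B) = mmul (mtrans B) (mtrans A)"
  by (simp add: mtrans_def mmul_def mult.commute)

lemma mtrans_mtrans [simp]: "mtrans (mtrans A) = A"
  by (simp add: mtrans_def)

lemma mtrans_mid [simp]: "mtrans mid = mid"
  by (auto simp: mtrans_def mid_def fun_eq_iff)

lemma mtrans_msum: "mtrans (msum K F) = msum K (\<lambda>a. mtrans (F a))"
  by (simp add: mtrans_def msum_def)

lemma col_finite_iff_row_finite_mtrans: "col_finite A \<longleftrightarrow> row_finite (mtrans A)"
  by (simp add: col_finite_def row_finite_def mtrans_def)

lemma row_finite_mmul:
  assumes "row_finite A" "row_finite B"
  shows "row_finite (mmul A B)"
  unfolding row_finite_def
proof
  fix i
  have "{j. mmul A B i j \<noteq> 0} \<subseteq> (\<Union>k\<in>{k. A i k \<noteq> 0}. {j. B k j \<noteq> 0})"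
    using mmul_nonzero_imp by blast
  moreover have "finite (\<Union>k\<in>{k. A i k \<noteq> 0}. {j. B k j \<noteq> 0})"
    using assms unfolding row_finite_def by blast
  ultimately show "finite {j. mmul A B i j \<noteq> 0}" by (rule finite_subset)
qed

lemma row_finite_mid [simp]: "row_finite mid"
  by (simp add: row_finite_def mid_def)

lemma row_finite_mpow: "row_finite A \<Longrightarrow> row_finite (mpow A m)"
  by (induction m) (auto intro: row_finite_mmul)

lemma mmul_msum_right:
  assumes "finite K" "row_finite A"
  shows "mmul A (msum K F) = msum K (\<lambda>a. mmul A (F a))"
proof (intro ext)
  fix i j
  have "(\<lambda>k. A i k * F a k j) summable_on UNIV" for a
    by (rule summable_on_finite_support, rule finite_subset[of _ "{k. A i k \<noteq> 0}"])
      (use assms in \<open>auto simp: row_finite_def\<close>)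
  then show "mmul A (msum K F) i j = msum K (\<lambda>a. mmul A (F a)) i j"
    using assms by (simp add: mmul_def msum_def sum_distrib_left infsum_sum)
qed

lemma mmul_msum_left:
  assumes "finite K" "\<And>a. a \<in> K \<Longrightarrow> row_finite (F a)"
  shows "mmul (msum K F) B = msum K (\<lambda>a. mmul (F a) B)"
proof (intro ext)
  fix i j
  have "(\<lambda>k. F a i k * B k j) summable_on UNIV" if "a \<in> K" for a
    by (rule summable_on_finite_support, rule finite_subset[of _ "{k. F a i k \<noteq> 0}"])
      (use assms that in \<open>auto simp: row_finite_def\<close>)
  then show "mmul (msum K F) B i j = msum K (\<lambda>a. mmul (F a) B) i j"
    using assms by (simp add: mmul_def msum_def sum_distrib_right infsum_sum)
qed

lemma mpow_mmul_commute: "row_finite A \<Longrightarrow> mmul A (mpow A m) = mmul (mpow A m) A"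
proof (induction m)
  case (Suc m)
  have "mmul A (mpow A (Suc m)) = mmul (mmul A (mpow A m)) A"
    by (simp add: mmul_assoc_row_finite[symmetric] Suc.prems row_finite_mpow)
  then show ?case using Suc by simp
qed simp

lemma mtrans_mpow: "col_finite A \<Longrightarrow> mtrans (mpow A m) = mpow (mtrans A) m"
  by (induction m) (simp_all add: mtrans_mmul mpow_mmul_commute col_finite_iff_row_finite_mtrans)

lemma colmat_mvmul: "colmat (mvmul A v) = mmul A (colmat v)"
  by (simp add: mvmul_def mmul_def colmat_def)

lemma colmat_inject: "colmat u = colmat v \<Longrightarrow> u = v"
  by (simp add: colmat_def fun_eq_iff)

lemma row_finite_msum:
  assumes "finite K" "\<And>a. a \<in> K \<Longrightarrow> row_finite (F a)"
  shows "row_finite (msum K F)"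
  unfolding row_finite_def
proof
  fix i
  have "{k. msum K F i k \<noteq> 0} \<subseteq> (\<Union>a\<in>K. {k. F a i k \<noteq> 0})"
    by (auto simp: msum_def dest: sum.not_neutral_contains_not_neutral)
  moreover have "finite (\<Union>a\<in>K. {k. F a i k \<noteq> 0})"
    using assms by (auto simp: row_finite_def)
  ultimately show "finite {k. msum K F i k \<noteq> 0}" by (rule finite_subset)
qed

lemma msum_cong: "(\<And>a. a \<in> K \<Longrightarrow> F a = G a) \<Longrightarrow> msum K F = msum K G"
  by (simp add: msum_def)

section \<open>Powers and eigenvectors of conjugated matrices\<close>

lemma mpow_msum_orthogonal:
  assumes K: "finite K" and fin: "\<And>a. a \<in> K \<Longrightarrow> row_finite (F a)"
    and orth: "\<And>a b. a \<in> K \<Longrightarrow> b \<in> K \<Longrightarrow> a \<noteq> b \<Longrightarrow> mmul (F a) (F b) = mzero"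
    and m: "m \<ge> 1"
  shows "mpow (msum K F) m = msum K (\<lambda>a. mpow (F a) m)"
  using m
proof (induction m rule: dec_induct)
  case (step m)
  have fin_pow: "row_finite (mpow (F a) m)" if "a \<in> K" for a
    using fin that row_finite_mpow by blast
  have cross: "mmul (mpow (F a) m) (F b) = mzero" if "a \<in> K" "b \<in> K" "b \<noteq> a" for a b
  proof -
    obtain m' where m': "m = Suc m'" using step(1) by (cases m) auto
    have "mmul (mpow (F a) m) (F b) = mmul (mpow (F a) m') (mmul (F a) (F b))"
      unfolding m' mpow.simps by (rule mmul_assoc_row_finite) (use fin row_finite_mpow that in auto)
    also have "mmul (F a) (F b) = mzero"
      using orth that by blast
    finally show ?thesis by simp
  qed
  have "mpow (msum K F) (Suc m) = mmul (msum K (\<lambda>a. mpow (F a) m)) (msum K F)"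
    using step by simp
  also have "\<dots> = msum K (\<lambda>a. mmul (mpow (F a) m) (msum K F))"
    by (rule mmul_msum_left) (use K fin_pow in auto)
  also have "\<dots> = msum K (\<lambda>a. msum K (\<lambda>b. mmul (mpow (F a) m) (F b)))"
    by (rule msum_cong, rule mmul_msum_right) (use K fin_pow in auto)
  also have "\<dots> = msum K (\<lambda>a. mpow (F a) (Suc m))"
  proof (rule msum_cong)
    fix a assume a: "a \<in> K"
    have "msum K (\<lambda>b. mmul (mpow (F a) m) (F b)) i j
        = (\<Sum>b\<in>K. if b = a then mpow (F a) (Suc m) i j else 0)" for i j
      unfolding msum_def by (rule sum.cong) (auto simp: cross a mzero_def)
    then show "msum K (\<lambda>b. mmul (mpow (F a) m) (F b)) = mpow (F a) (Suc m)"
      using K a by (simp add: fun_eq_iff)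
  qed
  finally show ?case .
qed simp

lemma mpow_conj_msum:
  assumes K: "finite K" and P: "row_finite P" and Q: "row_finite Q" and QP: "mmul Q P = mid"
    and fin: "\<And>a. a \<in> K \<Longrightarrow> row_finite (F a)"
    and orth: "\<And>a b. a \<in> K \<Longrightarrow> b \<in> K \<Longrightarrow> a \<noteq> b \<Longrightarrow> mmul (F a) (F b) = mzero"
    and m: "m \<ge> 1"
  shows "mpow (mmul (mmul P (msum K F)) Q) m = msum K (\<lambda>a. mpow (mmul (mmul P (F a)) Q) m)"
proof -
  define C where "C a = mmul (mmul P (F a)) Q" for a
  have fin_P: "row_finite (mmul P (F a))" if "a \<in> K" for a
    by (rule row_finite_mmul[OF P fin[OF that]])
  have "mmul (mmul P (msum K F)) Q = msum K C"
    unfolding C_def using K P fin_P by (simp add: mmul_msum_right mmul_msum_left)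
  moreover have "mmul (C a) (C b) = mzero" if "a \<in> K" "b \<in> K" "a \<noteq> b" for a b
  proof -
    have "mmul (C a) (C b) = mmul (mmul P (F a)) (mmul Q (C b))"
      unfolding C_def by (rule mmul_assoc_row_finite) (use fin_P that Q in auto)
    also have "mmul Q (C b) = mmul (mmul Q (mmul P (F b))) Q"
      unfolding C_def by (rule mmul_assoc_row_finite[symmetric]) (use fin_P that Q in auto)
    also have "mmul Q (mmul P (F b)) = F b"
      using mmul_assoc_row_finite[OF Q P, of "F b"] QP by simp
    also have "mmul (mmul P (F a)) (mmul (F b) Q) = mmul (mmul (mmul P (F a)) (F b)) Q"
      by (rule mmul_assoc_row_finite[symmetric]) (use fin_P fin that in auto)
    also have "mmul (mmul P (F a)) (F b) = mmul P (mmul (F a) (F b))"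
      by (rule mmul_assoc_row_finite) (use P fin that in auto)
    also have "mmul (F a) (F b) = mzero"
      using orth that by blast
    finally show ?thesis by simp
  qed
  ultimately show ?thesis
    using mpow_msum_orthogonal[OF K _ _ m, of C] P Q fin_P by (auto simp: C_def intro: row_finite_mmul)
qed

lemma mtrans_mzero [simp]: "mtrans mzero = mzero"
  by (simp add: mtrans_def mzero_def)

lemma mpow_conj_msum_col_finite:
  assumes K: "finite K" and P: "col_finite P" and Q: "col_finite Q" and QP: "mmul Q P = mid"
    and fin: "\<And>a. a \<in> K \<Longrightarrow> col_finite (F a)"
    and orth: "\<And>a b. a \<in> K \<Longrightarrow> b \<in> K \<Longrightarrow> a \<noteq> b \<Longrightarrow> mmul (F a) (F b) = mzero"
    and m: "m \<ge> 1"
  shows "mpow (mmul (mmul P (msum K F)) Q) m = msum K (\<lambda>a. mpow (mmul (mmul P (F a)) Q) m)"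
proof -
  define C where "C X = mmul (mmul P X) Q" for X
  have Pt: "row_finite (mtrans P)" and Qt: "row_finite (mtrans Q)"
    using P Q by (simp_all add: col_finite_iff_row_finite_mtrans)
  have C_mtrans: "mtrans (C X) = mmul (mmul (mtrans Q) (mtrans X)) (mtrans P)" if "col_finite X" for X
    using Qt that by (simp add: C_def mtrans_mmul mmul_assoc_row_finite col_finite_iff_row_finite_mtrans)
  have C_fin: "col_finite (C X)" if "col_finite X" for X
    using C_mtrans[OF that] Pt Qt that
    by (simp add: col_finite_iff_row_finite_mtrans row_finite_mmul)
  have sum_fin: "col_finite (msum K F)"
    using K fin by (simp add: col_finite_iff_row_finite_mtrans mtrans_msum row_finite_msum)
  have "mtrans (mpow (C (msum K F)) m) = mpow (mtrans (C (msum K F))) m"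
    by (rule mtrans_mpow[OF C_fin[OF sum_fin]])
  also have "\<dots> = mpow (mmul (mmul (mtrans Q) (msum K (\<lambda>a. mtrans (F a)))) (mtrans P)) m"
    by (simp only: C_mtrans[OF sum_fin] mtrans_msum)
  also have "\<dots> = msum K (\<lambda>a. mpow (mmul (mmul (mtrans Q) (mtrans (F a))) (mtrans P)) m)"
  proof (rule mpow_conj_msum[OF K Qt Pt _ _ _ m])
    show "mmul (mtrans P) (mtrans Q) = mid"
      using arg_cong[OF QP, of mtrans] by (simp add: mtrans_mmul)
    show "row_finite (mtrans (F a))" if "a \<in> K" for a
      using fin[OF that] by (simp add: col_finite_iff_row_finite_mtrans)
    show "mmul (mtrans (F a)) (mtrans (F b)) = mzero" if "a \<in> K" "b \<in> K" "a \<noteq> b" for a b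
      using orth[of b a] that by (simp add: mtrans_mmul[symmetric])
  qed
  also have "\<dots> = mtrans (msum K (\<lambda>a. mpow (C (F a)) m))"
    unfolding mtrans_msum
    by (rule msum_cong) (simp add: mtrans_mpow C_fin C_mtrans fin)
  finally have "mpow (C (msum K F)) m = msum K (\<lambda>a. mpow (C (F a)) m)"
    by (metis mtrans_mtrans)
  then show ?thesis by (simp add: C_def)
qed

lemma mpow_conj_eigenvector:
  assumes P: "row_finite P" and Q: "row_finite Q" and QP: "mmul Q P = mid"
    and Y: "row_finite Y" and eigen: "mvmul Y v = (\<lambda>i. x * v i)"
  shows "mvmul (mpow (mmul (mmul P Y) Q) m) (mvmul P v) = (\<lambda>i. x ^ m * mvmul P v i)"
proof -
  define J where "J = mmul (mmul P Y) Q"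
  define X where "X = colmat v"
  have J: "row_finite J" unfolding J_def using P Q Y by (auto intro: row_finite_mmul)
  have YX: "mmul Y X = mscale x X"
    unfolding X_def colmat_mvmul[symmetric] by (simp add: eigen colmat_def mscale_def)
  have JPX: "mmul J (mmul P X) = mscale x (mmul P X)"
  proof -
    have "mmul J (mmul P X) = mmul (mmul P Y) (mmul Q (mmul P X))"
      unfolding J_def by (rule mmul_assoc_row_finite) (use P Y Q in \<open>auto intro: row_finite_mmul\<close>)
    also have "mmul Q (mmul P X) = X"
      using mmul_assoc_row_finite[OF Q P, of X] QP by simp
    also have "mmul (mmul P Y) X = mmul P (mmul Y X)"
      by (rule mmul_assoc_row_finite[OF P Y])
    finally show ?thesis by (simp add: YX mmul_mscale_right)
  qed
  have pow: "mmul (mpow J m) (mmul P X) = mscale (x ^ m) (mmul P X)"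
  proof (induction m)
    case (Suc m)
    have "mmul (mpow J (Suc m)) (mmul P X) = mmul (mpow J m) (mmul J (mmul P X))"
      using J row_finite_mpow by (simp add: mmul_assoc_row_finite)
    also have "\<dots> = mscale x (mmul (mpow J m) (mmul P X))"
      by (simp only: JPX mmul_mscale_right)
    also have "\<dots> = mscale (x ^ Suc m) (mmul P X)"
      using Suc.IH by (simp add: mscale_def mult.assoc)
    finally show ?case .
  qed (simp add: mscale_def)
  have "colmat (mvmul (mpow J m) (mvmul P v)) = mmul (mpow J m) (mmul P X)"
    by (simp only: colmat_mvmul X_def)
  also have "\<dots> = colmat (\<lambda>i. x ^ m * mvmul P v i)"
    unfolding pow by (simp add: X_def mscale_def colmat_def mvmul_def mmul_def)
  finally have "colmat (mvmul (mpow J m) (mvmul P v)) = colmat (\<lambda>i. x ^ m * mvmul P v i)" .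
  then show ?thesis unfolding J_def by (rule colmat_inject)
qed

section \<open>Triangular matrices and their inverses\<close>

definition lower_triangular :: "smat \<Rightarrow> bool" where
  "lower_triangular A \<longleftrightarrow> (\<forall>i j. i < j \<longrightarrow> A i j = 0)"

definition strictly_lower_triangular :: "smat \<Rightarrow> bool" where
  "strictly_lower_triangular A \<longleftrightarrow> (\<forall>i j. i \<le> j \<longrightarrow> A i j = 0)"

definition upper_triangular :: "smat \<Rightarrow> bool" where
  "upper_triangular A \<longleftrightarrow> (\<forall>i j. j < i \<longrightarrow> A i j = 0)"

lemma upper_triangular_iff_lower_triangular_mtrans:
  "upper_triangular A \<longleftrightarrow> lower_triangular (mtrans A)"
  unfolding upper_triangular_def lower_triangular_def mtrans_def by blast

lemma lower_triangular_if_strictly: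
  "strictly_lower_triangular A \<Longrightarrow> lower_triangular A"
  unfolding strictly_lower_triangular_def lower_triangular_def by simp

lemma lower_triangular_mid: "lower_triangular mid"
  by (simp add: lower_triangular_def mid_def)

lemma row_finite_lower_triangular:
  assumes "lower_triangular A"
  shows "row_finite A"
  unfolding row_finite_def
proof
  fix i
  show "finite {k. A i k \<noteq> 0}"
    by (rule finite_subset[of _ "{..i}"]) (use assms in \<open>auto simp: lower_triangular_def intro!: leI\<close>)
qed

lemma col_finite_upper_triangular: "upper_triangular A \<Longrightarrow> col_finite A"
  by (simp add: upper_triangular_iff_lower_triangular_mtrans col_finite_iff_row_finite_mtrans
      row_finite_lower_triangular)

lemma lower_triangular_mmul:
  "lower_triangular A \<Longrightarrow> lower_triangular B \<Longrightarrow> lower_triangular (mmul A B)"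
  unfolding lower_triangular_def by (meson mmul_nonzero_imp not_le order.strict_trans1)

lemma strictly_lower_triangular_mmul:
  "lower_triangular A \<Longrightarrow> strictly_lower_triangular B \<Longrightarrow> strictly_lower_triangular (mmul A B)"
  unfolding lower_triangular_def strictly_lower_triangular_def
  by (meson mmul_nonzero_imp not_le order.strict_trans1)

lemma lower_triangular_mpow: "lower_triangular A \<Longrightarrow> lower_triangular (mpow A m)"
  by (induction m) (simp_all add: lower_triangular_mmul lower_triangular_mid)

lemma strictly_lower_triangular_mpow:
  assumes "strictly_lower_triangular A" "m \<ge> 1"
  shows "strictly_lower_triangular (mpow A m)"
proof -
  have "lower_triangular A"
    using assms(1) by (rule lower_triangular_if_strictly)
  then show ?thesis
    using assms by (cases m) (auto intro: strictly_lower_triangular_mmul lower_triangular_mpow)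
qed

lemma mexp_strictly_lower_triangular:
  assumes "strictly_lower_triangular Y"
  shows "lower_triangular (mexp Y)" "mexp Y i i = 1"
proof -
  have "lower_triangular (mpow Y m)" for m
    using assms by (simp add: lower_triangular_mpow lower_triangular_if_strictly)
  then show "lower_triangular (mexp Y)"
    unfolding mexp_def lower_triangular_def by (auto intro!: infsum_0)
  have "mexp Y i i = (\<Sum>m\<in>{0}. mpow Y m i i / fact m)"
    unfolding mexp_def
  proof (rule infsum_finite_support)
    fix m :: nat assume "m \<notin> {0}"
    then have "strictly_lower_triangular (mpow Y m)"
      using assms strictly_lower_triangular_mpow by auto
    then show "mpow Y m i i / fact m = 0" by (simp add: strictly_lower_triangular_def)
  qed simp
  then show "mexp Y i i = 1" by (simp add: mid_def)
qed

text \<open>Forward substitution gives a right and a left inverse of a lower triangular matrix with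
  nonzero diagonal; by associativity they coincide, which pins down \<open>minv A\<close>.\<close>

function lower_rinv :: "smat \<Rightarrow> nat \<Rightarrow> nat \<Rightarrow> real" where
  "lower_rinv A i j = (if i < j then 0
     else (mid i j - (\<Sum>k<i. A i k * lower_rinv A k j)) / A i i)"
  by pat_completeness auto
termination by (relation "Wellfounded.measure (\<lambda>(A, i, j). i)") auto

function lower_linv :: "smat \<Rightarrow> nat \<Rightarrow> nat \<Rightarrow> real" where
  "lower_linv A i j = (if i < j then 0
     else (mid i j - (\<Sum>k\<in>{j<..i}. lower_linv A i k * A k j)) / A j j)"
  by pat_completeness auto
termination by (relation "Wellfounded.measure (\<lambda>(A, i, j). i - j)") auto

declare lower_rinv.simps [simp del] lower_linv.simps [simp del]

lemma lower_triangular_lower_rinv: "lower_triangular (lower_rinv A)"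
  unfolding lower_triangular_def by (intro allI impI, subst lower_rinv.simps) simp

lemma lower_triangular_lower_linv: "lower_triangular (lower_linv A)"
  unfolding lower_triangular_def by (intro allI impI, subst lower_linv.simps) simp

lemma mmul_lower_rinv:
  assumes A: "lower_triangular A" and diag: "\<And>i. A i i \<noteq> 0"
  shows "mmul A (lower_rinv A) = mid"
proof (intro ext)
  fix i j
  have "mmul A (lower_rinv A) i j = (\<Sum>k\<in>{..i}. A i k * lower_rinv A k j)"
    unfolding mmul_def by (rule infsum_finite_support) (use A in \<open>auto simp: lower_triangular_def\<close>)
  also have "\<dots> = A i i * lower_rinv A i j + (\<Sum>k<i. A i k * lower_rinv A k j)"
    by (simp add: lessThan_Suc_atMost[symmetric])
  also have "\<dots> = mid i j"
  proof (cases "i < j")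
    case True
    then show ?thesis
      using lower_triangular_lower_rinv by (auto simp: lower_triangular_def mid_def)
  next
    case False
    then show ?thesis using diag[of i] by (subst (1) lower_rinv.simps) simp
  qed
  finally show "mmul A (lower_rinv A) i j = mid i j" .
qed

lemma mmul_lower_linv:
  assumes A: "lower_triangular A" and diag: "\<And>i. A i i \<noteq> 0"
  shows "mmul (lower_linv A) A = mid"
proof (intro ext)
  fix i j
  show "mmul (lower_linv A) A i j = mid i j"
  proof (cases "i < j")
    case True
    then have "mmul (lower_linv A) A i j = 0"
      using lower_triangular_mmul[OF lower_triangular_lower_linv A]
      by (simp add: lower_triangular_def)
    then show ?thesis using True by (simp add: mid_def)
  next
    case False
    have "mmul (lower_linv A) A i j = (\<Sum>k\<in>{j..i}. lower_linv A i k * A k j)"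
      unfolding mmul_def
      by (rule infsum_finite_support)
        (use A lower_triangular_lower_linv in \<open>auto simp: lower_triangular_def not_le\<close>)
    also have "{j..i} = insert j {j<..i}" using False by auto
    also have "(\<Sum>k\<in>insert j {j<..i}. lower_linv A i k * A k j)
        = lower_linv A i j * A j j + (\<Sum>k\<in>{j<..i}. lower_linv A i k * A k j)"
      by simp
    also have "\<dots> = mid i j"
      using diag[of j] False by (subst (1) lower_linv.simps) simp
    finally show ?thesis .
  qed
qed

lemma minv_lower_triangular:
  assumes A: "lower_triangular A" and diag: "\<And>i. A i i \<noteq> 0"
  shows "mmul A (minv A) = mid" "mmul (minv A) A = mid" "lower_triangular (minv A)"
proof -
  have R: "mmul A (lower_rinv A) = mid" by (rule mmul_lower_rinv[OF A diag])
  have L: "mmul (lower_linv A) A = mid" by (rule mmul_lower_linv[OF A diag])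
  have fin_A: "row_finite A" and fin_L: "row_finite (lower_linv A)"
    using A lower_triangular_lower_linv by (simp_all add: row_finite_lower_triangular)
  have "lower_linv A = mmul (mmul (lower_linv A) A) (lower_rinv A)"
    using R by (simp add: mmul_assoc_row_finite[OF fin_L fin_A])
  then have LR: "lower_linv A = lower_rinv A" using L by simp
  have "minv A = lower_rinv A"
    unfolding minv_def
  proof (rule the_equality)
    fix Z assume Z: "mmul A Z = mid \<and> mmul Z A = mid"
    have "Z = mmul (mmul (lower_linv A) A) Z" using L by simp
    also have "\<dots> = lower_linv A" using Z by (simp add: mmul_assoc_row_finite[OF fin_L fin_A])
    finally show "Z = lower_rinv A" using LR by simp
  qed (use L R LR in simp)
  then show "mmul A (minv A) = mid" "mmul (minv A) A = mid" "lower_triangular (minv A)"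
    using R L LR lower_triangular_lower_rinv by auto
qed

lemma minv_upper_triangular:
  assumes A: "upper_triangular A" and diag: "\<And>i. A i i \<noteq> 0"
  shows "mmul A (minv A) = mid" "mmul (minv A) A = mid" "upper_triangular (minv A)"
proof -
  have At: "lower_triangular (mtrans A)"
    using A by (simp add: upper_triangular_iff_lower_triangular_mtrans)
  define X where "X = mtrans (minv (mtrans A))"
  have diag_t: "\<And>i. mtrans A i i \<noteq> 0" using diag by (simp add: mtrans_def)
  note inv_t = minv_lower_triangular[OF At diag_t]
  have AX: "mmul A X = mid"
    unfolding X_def using arg_cong[OF inv_t(2), of mtrans] by (simp add: mtrans_mmul)
  have XA: "mmul X A = mid"
    unfolding X_def using arg_cong[OF inv_t(1), of mtrans] by (simp add: mtrans_mmul)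
  have X: "upper_triangular X"
    using inv_t(3) by (simp add: X_def upper_triangular_iff_lower_triangular_mtrans)
  have "minv A = X"
    unfolding minv_def
  proof (rule the_equality)
    fix Z assume Z: "mmul A Z = mid \<and> mmul Z A = mid"
    have "Z = mmul Z (mmul A X)" using AX by simp
    also have "\<dots> = X"
      using Z col_finite_upper_triangular[OF A] col_finite_upper_triangular[OF X]
      by (simp add: mmul_assoc_col_finite[symmetric])
    finally show "Z = X" .
  qed (use AX XA in simp)
  then show "mmul A (minv A) = mid" "mmul (minv A) A = mid" "upper_triangular (minv A)"
    using AX XA X by auto
qed

section \<open>Shift matrices\<close>

definition shift_matrix :: "(nat \<Rightarrow> nat) \<Rightarrow> smat" where
  "shift_matrix \<sigma> = (\<lambda>i j. if j = \<sigma> i then 1 else 0)"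

text \<open>The entrywise form of commuting with \<open>shift_matrix \<sigma>\<close> (for injective \<open>\<sigma>\<close>), which, unlike the
  matrix identity, is obviously preserved by entrywise sums and series.\<close>
definition shift_invariant :: "(nat \<Rightarrow> nat) \<Rightarrow> smat \<Rightarrow> bool" where
  "shift_invariant \<sigma> A \<longleftrightarrow>
     (\<forall>i l. A (\<sigma> i) (\<sigma> l) = A i l) \<and> (\<forall>i j. j \<notin> range \<sigma> \<longrightarrow> A (\<sigma> i) j = 0)"

lemma infsum_reindex_range:
  fixes f :: "'a \<Rightarrow> 'b::{topological_comm_monoid_add, t2_space}"
  assumes "inj \<sigma>" "\<And>k. k \<notin> range \<sigma> \<Longrightarrow> f k = 0"
  shows "infsum f UNIV = infsum (\<lambda>k. f (\<sigma> k)) UNIV"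
proof -
  have "infsum f UNIV = infsum f (range \<sigma>)"
    by (rule infsum_cong_neutral) (use assms in auto)
  also have "\<dots> = infsum (f \<circ> \<sigma>) UNIV"
    by (rule infsum_reindex) (use assms in auto)
  finally show ?thesis by (simp add: comp_def)
qed

lemma mmul_shift_matrix_left: "mmul (shift_matrix \<sigma>) A i j = A (\<sigma> i) j"
proof -
  have "mmul (shift_matrix \<sigma>) A i j = (\<Sum>k\<in>{\<sigma> i}. shift_matrix \<sigma> i k * A k j)"
    unfolding mmul_def by (rule infsum_finite_support) (auto simp: shift_matrix_def)
  then show ?thesis by (simp add: shift_matrix_def)
qed

lemma mmul_shift_matrix_right_image:
  assumes "inj \<sigma>"
  shows "mmul A (shift_matrix \<sigma>) i (\<sigma> k) = A i k"
proof -
  have "mmul A (shift_matrix \<sigma>) i (\<sigma> k) = (\<Sum>l\<in>{k}. A i l * shift_matrix \<sigma> l (\<sigma> k))"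
    unfolding mmul_def by (rule infsum_finite_support) (use assms in \<open>auto simp: shift_matrix_def inj_eq\<close>)
  then show ?thesis by (simp add: shift_matrix_def)
qed

lemma mmul_shift_matrix_right_not_range:
  "j \<notin> range \<sigma> \<Longrightarrow> mmul A (shift_matrix \<sigma>) i j = 0"
  unfolding mmul_def by (rule infsum_0) (auto simp: shift_matrix_def)

lemma mmul_mtrans_shift_matrix_right: "mmul A (mtrans (shift_matrix \<sigma>)) i j = A i (\<sigma> j)"
proof -
  have "mmul A (mtrans (shift_matrix \<sigma>)) i j = (\<Sum>k\<in>{\<sigma> j}. A i k * mtrans (shift_matrix \<sigma>) k j)"
    unfolding mmul_def by (rule infsum_finite_support) (auto simp: shift_matrix_def mtrans_def)
  then show ?thesis by (simp add: shift_matrix_def mtrans_def)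
qed

lemma row_finite_shift_matrix: "row_finite (shift_matrix \<sigma>)"
  by (simp add: row_finite_def shift_matrix_def)

lemma col_finite_shift_matrix:
  assumes "inj \<sigma>"
  shows "col_finite (shift_matrix \<sigma>)"
  unfolding col_finite_def
proof
  fix j
  have "{k. shift_matrix \<sigma> k j \<noteq> 0} \<subseteq> \<sigma> -` {j}" by (auto simp: shift_matrix_def)
  moreover have "finite (\<sigma> -` {j})" using assms by (simp add: finite_vimageI)
  ultimately show "finite {k. shift_matrix \<sigma> k j \<noteq> 0}" by (rule finite_subset)
qed

lemma mmul_assoc_shift_matrix:
  assumes "inj \<sigma>"
  shows "mmul (mmul A (shift_matrix \<sigma>)) C = mmul A (mmul (shift_matrix \<sigma>) C)"
proof (intro ext)
  fix i j
  have "mmul (mmul A (shift_matrix \<sigma>)) C i j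
      = infsum (\<lambda>k. mmul A (shift_matrix \<sigma>) i (\<sigma> k) * C (\<sigma> k) j) UNIV"
    unfolding mmul_def[of "mmul A (shift_matrix \<sigma>)"]
    by (rule infsum_reindex_range[OF assms]) (simp add: mmul_shift_matrix_right_not_range)
  also have "\<dots> = infsum (\<lambda>k. A i k * C (\<sigma> k) j) UNIV"
    using assms by (simp add: mmul_shift_matrix_right_image)
  also have "\<dots> = mmul A (mmul (shift_matrix \<sigma>) C) i j"
    by (simp add: mmul_shift_matrix_left mmul_def[of A])
  finally show "mmul (mmul A (shift_matrix \<sigma>)) C i j = mmul A (mmul (shift_matrix \<sigma>) C) i j" .
qed

lemma mmul_assoc_mtrans_shift_matrix:
  assumes "inj \<sigma>"
  shows "mmul (mmul A (mtrans (shift_matrix \<sigma>))) C = mmul A (mmul (mtrans (shift_matrix \<sigma>)) C)"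
  using arg_cong[OF mmul_assoc_shift_matrix[OF assms, of "mtrans C" "mtrans A"], of mtrans]
  by (simp add: mtrans_mmul)

lemma shift_matrix_commute:
  assumes "inj \<sigma>" "shift_invariant \<sigma> A"
  shows "mmul (shift_matrix \<sigma>) A = mmul A (shift_matrix \<sigma>)"
proof (intro ext)
  fix i j
  show "mmul (shift_matrix \<sigma>) A i j = mmul A (shift_matrix \<sigma>) i j"
  proof (cases "j \<in> range \<sigma>")
    case True
    then obtain l where "j = \<sigma> l" by auto
    then show ?thesis
      using assms by (simp add: mmul_shift_matrix_left mmul_shift_matrix_right_image shift_invariant_def)
  next
    case False
    then show ?thesis
      using assms by (simp add: mmul_shift_matrix_left mmul_shift_matrix_right_not_range shift_invariant_def)
  qed
qed

lemma mtrans_shift_matrix_commute: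
  assumes "inj \<sigma>" "shift_invariant \<sigma> (mtrans A)"
  shows "mmul (mtrans (shift_matrix \<sigma>)) A = mmul A (mtrans (shift_matrix \<sigma>))"
  using arg_cong[OF shift_matrix_commute[OF assms], of mtrans] by (simp add: mtrans_mmul)

lemma shift_invariant_mmul:
  assumes inj: "inj \<sigma>" and A: "shift_invariant \<sigma> A" and B: "shift_invariant \<sigma> B"
  shows "shift_invariant \<sigma> (mmul A B)"
proof -
  have row: "mmul A B (\<sigma> i) j = infsum (\<lambda>k. A i k * B (\<sigma> k) j) UNIV" for i j
  proof -
    have "mmul A B (\<sigma> i) j = infsum (\<lambda>k. A (\<sigma> i) (\<sigma> k) * B (\<sigma> k) j) UNIV"
      unfolding mmul_def by (rule infsum_reindex_range[OF inj]) (use A in \<open>auto simp: shift_invariant_def\<close>)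
    then show ?thesis using A by (simp add: shift_invariant_def)
  qed
  show ?thesis
    unfolding shift_invariant_def
  proof (intro conjI allI impI)
    fix i l show "mmul A B (\<sigma> i) (\<sigma> l) = mmul A B i l"
      using B by (subst row) (simp add: shift_invariant_def mmul_def)
  next
    fix i j assume "j \<notin> range \<sigma>"
    then show "mmul A B (\<sigma> i) j = 0" using B by (simp add: row shift_invariant_def)
  qed
qed

lemma shift_invariant_mid: "inj \<sigma> \<Longrightarrow> shift_invariant \<sigma> mid"
  unfolding shift_invariant_def mid_def by (auto simp: inj_eq)

lemma shift_invariant_mpow: "inj \<sigma> \<Longrightarrow> shift_invariant \<sigma> A \<Longrightarrow> shift_invariant \<sigma> (mpow A m)"
  by (induction m) (auto intro: shift_invariant_mmul shift_invariant_mid)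

lemma shift_invariant_mtrans_mpow:
  assumes "inj \<sigma>" "shift_invariant \<sigma> (mtrans A)"
  shows "shift_invariant \<sigma> (mtrans (mpow A m))"
  by (induction m) (simp_all add: assms mtrans_mmul shift_invariant_mmul shift_invariant_mid)

lemma shift_invariant_sum:
  "(\<And>a. shift_invariant \<sigma> (F a)) \<Longrightarrow> shift_invariant \<sigma> (\<lambda>i j. \<Sum>a\<in>K. F a i j)"
  by (simp add: shift_invariant_def)

lemma shift_invariant_infsum:
  "(\<And>m. shift_invariant \<sigma> (F m)) \<Longrightarrow> shift_invariant \<sigma> (\<lambda>i j. infsum (\<lambda>m. c m * F m i j) S)"
  by (simp add: shift_invariant_def)

lemma shift_invariant_mexp:
  assumes "inj \<sigma>" "shift_invariant \<sigma> X"
  shows "shift_invariant \<sigma> (mexp X)"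
  using shift_invariant_infsum[of \<sigma> "mpow X" "\<lambda>m. 1 / fact m" UNIV] assms
  by (simp add: mexp_def shift_invariant_mpow)

locale composition =
  fixes p :: nat and n :: "nat \<Rightarrow> nat"
  assumes p_pos: "p \<ge> 1" and parts_pos: "\<forall>a\<in>{1..p}. n a > 0"
begin

abbreviation N :: nat where "N \<equiv> cnorm p n"

definition part_end :: "nat \<Rightarrow> nat" where
  "part_end a = (\<Sum>c=1..a. n c)"

definition part_start :: "nat \<Rightarrow> nat" where
  "part_start a = (\<Sum>c=1..<a. n c)"

definition index_of :: "nat \<Rightarrow> nat \<Rightarrow> nat" where
  "index_of a k = (k div n a) * N + part_start a + k mod n a"

definition next_index :: "nat \<Rightarrow> nat" where
  "next_index i = index_of (aidx p n i) (kidx p n i + 1)"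

lemma N_eq_part_end: "N = part_end p"
  by (simp add: cnorm_def part_end_def)

lemma part_end_eq: "a \<ge> 1 \<Longrightarrow> part_end a = part_start a + n a"
  by (simp add: part_end_def part_start_def atLeastLessThanSuc_atLeastAtMost[symmetric]
      atLeastLessThanSuc)

lemma part_start_eq: "a \<ge> 1 \<Longrightarrow> part_start a = part_end (a - 1)"
  by (simp add: part_end_def part_start_def atLeastLessThanSuc_atLeastAtMost[symmetric])

lemma part_end_mono: "a \<le> b \<Longrightarrow> part_end a \<le> part_end b"
  unfolding part_end_def by (rule sum_mono2) auto

lemma N_pos: "N > 0"
  using part_end_eq[OF p_pos] parts_pos p_pos by (simp add: N_eq_part_end)

lemma aidx_bounds:
  shows "1 \<le> aidx p n i" "aidx p n i \<le> p"
    "part_start (aidx p n i) \<le> i mod N" "i mod N < part_end (aidx p n i)"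
proof -
  define r where "r = i mod N"
  have r_lt: "r < part_end p" using N_pos N_eq_part_end r_def by simp
  have a_eq: "aidx p n i = (LEAST a. r < part_end a)"
    by (simp add: aidx_def r_def part_end_def)
  show lt: "i mod N < part_end (aidx p n i)"
    unfolding a_eq r_def[symmetric] by (rule LeastI[of _ p]) (rule r_lt)
  show "aidx p n i \<le> p"
    unfolding a_eq by (rule Least_le) (rule r_lt)
  show ge: "1 \<le> aidx p n i"
    using lt by (cases "aidx p n i") (auto simp: part_end_def)
  have "\<not> r < part_end (aidx p n i - 1)"
    unfolding a_eq by (rule not_less_Least) (use ge a_eq in auto)
  then show "part_start (aidx p n i) \<le> i mod N"
    using part_start_eq[OF ge] r_def by simp
qed

lemma aidx_range: "aidx p n i \<in> {1..p}"
  using aidx_bounds by auto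

lemma index_of_offset_lt:
  assumes a: "a \<in> {1..p}"
  shows "part_start a + k mod n a < N"
proof -
  have "k mod n a < n a" using parts_pos a by auto
  moreover have "part_end a \<le> part_end p" using a by (auto intro: part_end_mono)
  ultimately show ?thesis using part_end_eq[of a] a N_eq_part_end by auto
qed

lemma aidx_index_of:
  assumes a: "a \<in> {1..p}"
  shows "aidx p n (index_of a k) = a"
proof -
  define r where "r = part_start a + k mod n a"
  have "index_of a k mod N = r"
    using index_of_offset_lt[OF a] by (simp add: index_of_def r_def add.assoc)
  then have "aidx p n (index_of a k) = (LEAST b. r < part_end b)"
    by (simp add: aidx_def part_end_def)
  also have "\<dots> = a"
  proof (rule Least_equality)
    show "r < part_end a" using parts_pos a part_end_eq[of a] by (auto simp: r_def)
  next
    fix b assume b: "r < part_end b"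
    show "a \<le> b"
    proof (rule ccontr)
      assume "\<not> a \<le> b"
      then have "part_end b \<le> part_end (a - 1)" by (intro part_end_mono) auto
      then show False using b part_start_eq[of a] a by (auto simp: r_def)
    qed
  qed
  finally show ?thesis .
qed

lemma kidx_index_of:
  assumes a: "a \<in> {1..p}"
  shows "kidx p n (index_of a k) = k"
proof -
  have "index_of a k div N = k div n a" "index_of a k mod N = part_start a + k mod n a"
    using index_of_offset_lt[OF a, of k] N_pos by (simp_all add: index_of_def add.assoc)
  then show ?thesis
    unfolding kidx_def part_start_def[symmetric] using aidx_index_of[OF a, of k] by simp
qed

lemma index_of_aidx_kidx: "index_of (aidx p n i) (kidx p n i) = i"
proof -
  define a where "a = aidx p n i"
  define r where "r = i mod N"
  define q where "q = i div N"
  have a: "a \<in> {1..p}" using aidx_range a_def by simp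
  have na: "n a > 0" using parts_pos a by auto
  have r: "part_start a \<le> r" "r < part_start a + n a"
    using aidx_bounds[of i] part_end_eq[of a] a by (auto simp: a_def r_def)
  have k: "kidx p n i = q * n a + (r - part_start a)"
    by (simp add: kidx_def a_def q_def r_def part_start_def)
  have "r - part_start a < n a" using r by simp
  then have "kidx p n i div n a = q" "kidx p n i mod n a = r - part_start a"
    using na by (simp_all add: k)
  then have "index_of a (kidx p n i) = q * N + part_start a + (r - part_start a)"
    by (simp add: index_of_def)
  also have "\<dots> = i" using r div_mult_mod_eq[of i N] by (simp add: q_def r_def)
  finally show ?thesis by (simp add: a_def)
qed

lemma aidx_kidx_inject: "aidx p n i = aidx p n j \<Longrightarrow> kidx p n i = kidx p n j \<Longrightarrow> i = j"
  by (metis index_of_aidx_kidx)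

lemma aidx_next_index [simp]: "aidx p n (next_index i) = aidx p n i"
  unfolding next_index_def by (rule aidx_index_of[OF aidx_range])

lemma kidx_next_index [simp]: "kidx p n (next_index i) = kidx p n i + 1"
  unfolding next_index_def by (rule kidx_index_of[OF aidx_range])

lemma inj_next_index: "inj next_index"
  by (rule injI, rule aidx_kidx_inject) (metis aidx_next_index, metis kidx_next_index add_right_cancel)

lemma index_of_Suc_gt:
  assumes a: "a \<in> {1..p}"
  shows "index_of a k < index_of a (Suc k)"
proof (cases "Suc (k mod n a) = n a")
  case True
  then have "Suc k div n a = Suc (k div n a)" "Suc k mod n a = 0"
    using parts_pos a by (simp_all add: div_Suc mod_Suc)
  then show ?thesis using index_of_offset_lt[OF a, of k] by (simp add: index_of_def)
next
  case False
  then have "Suc k div n a = k div n a" "Suc k mod n a = Suc (k mod n a)"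
    using parts_pos a by (simp_all add: div_Suc mod_Suc)
  then show ?thesis by (simp add: index_of_def)
qed

lemma next_index_gt: "i < next_index i"
  using index_of_Suc_gt[OF aidx_range, of i "kidx p n i"]
  by (simp add: next_index_def index_of_aidx_kidx)

lemma Lam_eq: "Lam p n a = (\<lambda>i j. if aidx p n i = a \<and> j = next_index i then 1 else 0)"
proof (intro ext)
  fix i j
  have "(aidx p n i = a \<and> aidx p n j = a \<and> kidx p n j = kidx p n i + 1)
      \<longleftrightarrow> (aidx p n i = a \<and> j = next_index i)"
    using aidx_kidx_inject[of j "next_index i"] by auto
  then show "Lam p n a i j = (if aidx p n i = a \<and> j = next_index i then 1 else 0)"
    by (simp add: Lam_def)
qed

lemma Ups_eq_shift_matrix: "Ups p n = shift_matrix next_index"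
proof (intro ext)
  fix i j
  have "Ups p n i j = (\<Sum>a\<in>{1..p}. if aidx p n i = a \<and> j = next_index i then 1 else 0)"
    by (simp add: Ups_def Lam_eq)
  also have "\<dots> = shift_matrix next_index i j"
    using aidx_range[of i] by (simp add: shift_matrix_def)
  finally show "Ups p n i j = shift_matrix next_index i j" .
qed

lemma Ups_eq_msum: "Ups p n = msum {1..p} (Lam p n)"
  by (simp add: Ups_def msum_def)

lemma row_finite_Lam: "row_finite (Lam p n a)"
proof -
  have "{k. Lam p n a i k \<noteq> 0} \<subseteq> {next_index i}" for i by (auto simp: Lam_eq)
  then show ?thesis unfolding row_finite_def by (meson finite.emptyI finite_insert finite_subset)
qed

lemma strictly_lower_triangular_mtrans_Lam: "strictly_lower_triangular (mtrans (Lam p n a))"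
  unfolding strictly_lower_triangular_def
proof (intro allI impI)
  fix i j :: nat assume "i \<le> j"
  then show "mtrans (Lam p n a) i j = 0"
    using next_index_gt[of j] by (auto simp: mtrans_def Lam_eq)
qed

lemma Lam_orthogonal: "a \<noteq> b \<Longrightarrow> mmul (Lam p n a) (Lam p n b) = mzero"
  unfolding mmul_def mzero_def by (intro ext infsum_0) (auto simp: Lam_eq)

lemma shift_invariant_Lam: "shift_invariant next_index (Lam p n a)"
  using inj_next_index by (auto simp: shift_invariant_def Lam_eq inj_eq)

lemma Ups_chi_eigenvector: "mvmul (Ups p n) (chi p n a x) = (\<lambda>i. x * chi p n a x i)"
proof (intro ext)
  fix i
  have "mvmul (Ups p n) (chi p n a x) i = chi p n a x (next_index i)"
    by (simp add: mvmul_def mmul_shift_matrix_left[where A="\<lambda>k j. chi p n a x k" and j=0,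
        unfolded mmul_def] Ups_eq_shift_matrix)
  then show "mvmul (Ups p n) (chi p n a x) i = x * chi p n a x i"
    by (simp add: chi_def)
qed

lemma shift_invariant_W0: "shift_invariant next_index (W0 p n t)"
  unfolding W0_def
  by (intro shift_invariant_mexp inj_next_index shift_invariant_sum shift_invariant_infsum
      shift_invariant_mpow shift_invariant_Lam)

lemma shift_invariant_mtrans_W0bar: "shift_invariant next_index (mtrans (W0bar p n tb))"
proof -
  define Y where "Y = (\<lambda>i k. \<Sum>b=1..p. infsum (\<lambda>j. tb j b * mpow (mtrans (Lam p n b)) j i k) {1..})"
  have Lam: "shift_invariant next_index (mtrans (mtrans (Lam p n b)))" for b
    by (simp add: shift_invariant_Lam)
  have "mtrans Y = (\<lambda>i k. \<Sum>b=1..p. infsum (\<lambda>j. tb j b * mtrans (mpow (mtrans (Lam p n b)) j) i k) {1..})"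
    by (simp add: Y_def mtrans_def)
  then have "shift_invariant next_index (mtrans Y)"
    by (simp only:) (intro shift_invariant_sum shift_invariant_infsum
        shift_invariant_mtrans_mpow[OF inj_next_index Lam])
  then have "shift_invariant next_index
      (\<lambda>i j. infsum (\<lambda>m. (1 / fact m) * mtrans (mpow Y m) i j) UNIV)"
    by (intro shift_invariant_infsum shift_invariant_mtrans_mpow[OF inj_next_index])
  then show ?thesis by (simp add: W0bar_def mexp_def Y_def mtrans_def)
qed

lemma lower_triangular_W0bar: "lower_triangular (W0bar p n tb)" "W0bar p n tb i i = 1"
proof -
  have "strictly_lower_triangular
      (\<lambda>i k. \<Sum>b=1..p. infsum (\<lambda>j. tb j b * mpow (mtrans (Lam p n b)) j i k) {1..})"
    using strictly_lower_triangular_mpow[OF strictly_lower_triangular_mtrans_Lam]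
    by (auto simp: strictly_lower_triangular_def intro!: sum.neutral infsum_0)
  then show "lower_triangular (W0bar p n tb)" "W0bar p n tb i i = 1"
    unfolding W0bar_def by (rule mexp_strictly_lower_triangular)+
qed

end

context composition
begin

lemma mpow_conj_Ups:
  assumes "row_finite P" "row_finite Q" "mmul Q P = mid" "m \<ge> 1"
  shows "mpow (mmul (mmul P (Ups p n)) Q) m
       = (\<lambda>i j. \<Sum>a=1..p. mpow (mmul (mmul P (Lam p n a)) Q) m i j)"
  using mpow_conj_msum[of "{1..p}" P Q "Lam p n" m] assms
  by (simp add: Ups_eq_msum row_finite_Lam Lam_orthogonal msum_def)

lemma mpow_conj_mtrans_Ups:
  assumes "col_finite P" "col_finite Q" "mmul Q P = mid" "m \<ge> 1"
  shows "mpow (mmul (mmul P (mtrans (Ups p n))) Q) m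
       = (\<lambda>i j. \<Sum>b=1..p. mpow (mmul (mmul P (mtrans (Lam p n b))) Q) m i j)"
proof -
  have orth: "mmul (mtrans (Lam p n a)) (mtrans (Lam p n b)) = mzero" if "a \<noteq> b" for a b
    using Lam_orthogonal[of b a] that by (simp add: mtrans_mmul[symmetric])
  have "mtrans (Ups p n) = msum {1..p} (\<lambda>b. mtrans (Lam p n b))"
    by (simp add: Ups_eq_msum mtrans_msum)
  moreover have "mpow (mmul (mmul P (msum {1..p} (\<lambda>b. mtrans (Lam p n b)))) Q) m
      = msum {1..p} (\<lambda>b. mpow (mmul (mmul P (mtrans (Lam p n b))) Q) m)"
    by (rule mpow_conj_msum_col_finite)
      (use assms orth in \<open>simp_all add: col_finite_iff_row_finite_mtrans row_finite_Lam\<close>)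
  ultimately show ?thesis by (simp add: msum_def)
qed

lemma conj_Ups_eigenvector:
  assumes "row_finite P" "row_finite Q" "mmul Q P = mid"
  shows "mvmul (mpow (mmul (mmul P (Ups p n)) Q) m) (mvmul P (chi p n a x))
       = (\<lambda>i. x ^ m * mvmul P (chi p n a x) i)"
proof -
  have "row_finite (Ups p n)"
    by (simp add: Ups_eq_shift_matrix row_finite_shift_matrix)
  then show ?thesis
    by (rule mpow_conj_eigenvector[OF assms _ Ups_chi_eigenvector])
qed

lemma conj_mtrans_Ups_left_eigenvector:
  assumes P: "col_finite P" and Q: "col_finite Q" and QP: "mmul Q P = mid"
  shows "mvmul (mtrans (mpow (mmul (mmul P (mtrans (Ups p n))) Q) m)) (mvmul (mtrans Q) (chi p n a x))
       = (\<lambda>i. x ^ m * mvmul (mtrans Q) (chi p n a x) i)"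
proof -
  have Pt: "row_finite (mtrans P)" and Qt: "row_finite (mtrans Q)"
    using P Q by (simp_all add: col_finite_iff_row_finite_mtrans)
  have Ups: "row_finite (Ups p n)"
    by (simp add: Ups_eq_shift_matrix row_finite_shift_matrix)
  define C where "C = mmul (mmul P (mtrans (Ups p n))) Q"
  have C_mtrans: "mtrans C = mmul (mmul (mtrans Q) (Ups p n)) (mtrans P)"
    unfolding C_def by (simp add: mtrans_mmul mmul_assoc_row_finite[OF Qt Ups])
  have "col_finite C"
    unfolding col_finite_iff_row_finite_mtrans C_mtrans using Pt Qt Ups by (intro row_finite_mmul)
  then have "mtrans (mpow C m) = mpow (mmul (mmul (mtrans Q) (Ups p n)) (mtrans P)) m"
    by (simp add: mtrans_mpow C_mtrans)
  moreover have "mmul (mtrans P) (mtrans Q) = mid"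
    using arg_cong[OF QP, of mtrans] by (simp add: mtrans_mmul)
  ultimately show ?thesis
    unfolding C_def[symmetric] using conj_Ups_eigenvector[OF Qt Pt] by simp
qed

end

section \<open>Intertwining of the shifts through the factorization\<close>

lemma mmul_intertwine:
  assumes YA: "mmul Y A = mmul A M" and MB: "mmul M B = mmul B T"
    and Y: "row_finite Y" and T: "col_finite T"
    and sm: "\<And>i j. (\<lambda>k. A i k * B k j) summable_on UNIV"
    and assoc: "mmul (mmul A M) B = mmul A (mmul M B)"
  shows "mmul Y (mmul A B) = mmul (mmul A B) T"
proof -
  have "mmul Y (mmul A B) = mmul (mmul Y A) B"
    using Y sm by (intro ext mmul_assoc_at_finite_row[symmetric]) (auto simp: row_finite_def)
  also have "\<dots> = mmul A (mmul B T)" by (simp add: YA assoc MB)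
  also have "\<dots> = mmul (mmul A B) T"
    using T sm by (intro ext mmul_assoc_at_finite_col[symmetric]) (auto simp: col_finite_def)
  finally show ?thesis .
qed

lemma mmul_commute_inverse:
  assumes TW: "mmul T W = mmul W T" and VW: "mmul V W = mid" and WV: "mmul W V = mid"
    and T: "row_finite T" and V: "row_finite V" and W: "row_finite W"
  shows "mmul T V = mmul V T"
proof -
  have "mmul T V = mmul (mmul V W) (mmul T V)" using VW by simp
  also have "\<dots> = mmul V (mmul W (mmul T V))"
    by (rule mmul_assoc_row_finite[OF V W])
  also have "mmul W (mmul T V) = mmul (mmul W T) V"
    by (rule mmul_assoc_row_finite[OF W T, symmetric])
  also have "\<dots> = mmul T (mmul W V)"
    by (simp add: TW[symmetric] mmul_assoc_row_finite[OF T W])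
  finally show ?thesis using WV by simp
qed

text \<open>The moment matrix depends on \<open>i, j\<close> only through the blocks \<open>a\<^sub>1(i), a\<^sub>2(j)\<close> and the
  sum \<open>k\<^sub>1(i) + k\<^sub>2(j)\<close>, so advancing the row index within its block has the same effect as
  advancing the column index.\<close>
lemma Ups_gmom_intertwine:
  assumes c1: "composition p1 n1" and c2: "composition p2 n2"
  shows "mmul (Ups p1 n1) (gmom M w1 w2 p1 n1 p2 n2)
       = mmul (gmom M w1 w2 p1 n1 p2 n2) (mtrans (Ups p2 n2))"
  by (intro ext) (simp add: composition.Ups_eq_shift_matrix[OF c1] composition.Ups_eq_shift_matrix[OF c2]
      mmul_shift_matrix_left mmul_mtrans_shift_matrix_right gmom_def
      composition.aidx_next_index[OF c1] composition.kidx_next_index[OF c1]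
      composition.aidx_next_index[OF c2] composition.kidx_next_index[OF c2])

lemma Ups_intertwine_factorization:
  assumes c1: "composition p1 n1" and c2: "composition p2 n2"
    and conv1: "\<forall>i j. (\<lambda>k. W0 p1 n1 t i k * gmom M w1 w2 p1 n1 p2 n2 k j) summable_on UNIV"
    and conv2: "\<forall>i j. (\<lambda>k. mmul (W0 p1 n1 t) (gmom M w1 w2 p1 n1 p2 n2) i k
                          * minv (W0bar p2 n2 tb) k j) summable_on UNIV"
    and factor: "mmul (mmul (W0 p1 n1 t) (gmom M w1 w2 p1 n1 p2 n2)) (minv (W0bar p2 n2 tb)) = G"
  shows "mmul (Ups p1 n1) G = mmul G (mtrans (Ups p2 n2))"
proof -
  interpret c1: composition p1 n1 by (rule c1)
  interpret c2: composition p2 n2 by (rule c2)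
  define Y T W g Wb where "Y = Ups p1 n1" and "T = mtrans (Ups p2 n2)" and "W = W0 p1 n1 t"
    and "g = gmom M w1 w2 p1 n1 p2 n2" and "Wb = W0bar p2 n2 tb"
  have Y: "row_finite Y"
    by (simp add: Y_def c1.Ups_eq_shift_matrix row_finite_shift_matrix)
  have T: "col_finite T"
    by (simp add: T_def c2.Ups_eq_shift_matrix col_finite_iff_row_finite_mtrans row_finite_shift_matrix)
  have T_row: "row_finite T"
    using col_finite_shift_matrix[OF c2.inj_next_index]
    by (simp add: T_def c2.Ups_eq_shift_matrix col_finite_iff_row_finite_mtrans)
  have Wb: "lower_triangular Wb" "\<And>i. Wb i i \<noteq> 0"
    by (simp_all add: Wb_def c2.lower_triangular_W0bar)
  note Wb_inv = minv_lower_triangular[OF Wb]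
  have Wb_inv_row: "row_finite (minv Wb)" and Wb_row: "row_finite Wb"
    using Wb_inv(3) Wb(1) by (simp_all add: row_finite_lower_triangular)
  have "mmul Y (mmul W g) = mmul (mmul W g) T"
  proof (rule mmul_intertwine[OF _ _ Y T])
    show "mmul Y W = mmul W Y"
      unfolding Y_def W_def c1.Ups_eq_shift_matrix
      by (rule shift_matrix_commute[OF c1.inj_next_index c1.shift_invariant_W0])
    show "mmul (mmul W Y) g = mmul W (mmul Y g)"
      unfolding Y_def c1.Ups_eq_shift_matrix by (rule mmul_assoc_shift_matrix[OF c1.inj_next_index])
  qed (use conv1 Ups_gmom_intertwine[OF c1 c2] in \<open>simp_all add: Y_def T_def W_def g_def\<close>)
  then have "mmul Y (mmul (mmul W g) (minv Wb)) = mmul (mmul (mmul W g) (minv Wb)) T"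
  proof (rule mmul_intertwine[OF _ _ Y T])
    have "mmul T Wb = mmul Wb T"
      unfolding T_def Wb_def c2.Ups_eq_shift_matrix
      by (rule mtrans_shift_matrix_commute[OF c2.inj_next_index c2.shift_invariant_mtrans_W0bar])
    then show "mmul T (minv Wb) = mmul (minv Wb) T"
      by (rule mmul_commute_inverse) (use Wb_inv T_row Wb_inv_row Wb_row in \<open>simp_all add: Wb_def\<close>)
    show "mmul (mmul (mmul W g) T) (minv Wb) = mmul (mmul W g) (mmul T (minv Wb))"
      unfolding T_def c2.Ups_eq_shift_matrix by (rule mmul_assoc_mtrans_shift_matrix[OF c2.inj_next_index])
  qed (use conv2 in \<open>simp add: W_def g_def Wb_def\<close>)
  then show ?thesis
    using factor by (simp add: Y_def T_def W_def g_def Wb_def)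
qed

lemma conj_eq_of_intertwine:
  assumes YG: "mmul Y (mmul L Sb) = mmul (mmul L Sb) T"
    and SL: "mmul S L = mid" and SbU: "mmul Sb U = mid"
    and S: "row_finite S" and L: "row_finite L" and Y: "row_finite Y"
    and T: "col_finite T" and U: "col_finite U"
  shows "mmul (mmul S Y) L = mmul (mmul Sb T) U"
proof -
  have L_eq: "L = mmul (mmul L Sb) U"
    using SbU by (simp add: mmul_assoc_row_col_finite[OF L U])
  have "mmul (mmul S Y) L = mmul (mmul S (mmul Y (mmul L Sb))) U"
    by (subst L_eq) (simp add: mmul_assoc_row_finite mmul_assoc_row_col_finite S Y U row_finite_mmul)
  also have "\<dots> = mmul (mmul (mmul S L) (mmul Sb T)) U"
    unfolding YG
    by (simp add: mmul_assoc_row_finite mmul_assoc_row_col_finite S L T)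
  finally show ?thesis by (simp add: SL)
qed

theorem proposition3p9:
  fixes M :: "real measure" and I :: "real set"
    and w1 w2 :: "nat \<Rightarrow> real \<Rightarrow> real"
    and p1 p2 :: nat and n1 n2 :: "nat \<Rightarrow> nat"
    and t tb :: "nat \<Rightarrow> nat \<Rightarrow> real"
    and S Sb :: smat
  assumes meas: "sets M = sets borel" "finite_measure M"
    and intv: "is_interval I" "emeasure M (UNIV - I) = 0"
    and comp1: "p1 \<ge> 1" "\<forall>a\<in>{1..p1}. n1 a > 0"
    and comp2: "p2 \<ge> 1" "\<forall>b\<in>{1..p2}. n2 b > 0"
    and mom_int: "\<forall>i j. integrable M (\<lambda>x. x ^ (kidx p1 n1 i + kidx p2 n2 j)
                        * w1 (aidx p1 n1 i) x * w2 (aidx p2 n2 j) x)"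
    and conv1: "\<forall>i j. (\<lambda>k. W0 p1 n1 t i k * gmom M w1 w2 p1 n1 p2 n2 k j) summable_on UNIV"
    and conv2: "\<forall>i j. (\<lambda>k. mmul (W0 p1 n1 t) (gmom M w1 w2 p1 n1 p2 n2) i k
                          * minv (W0bar p2 n2 tb) k j) summable_on UNIV"
    and S_lt: "\<forall>i. S i i = 1" "\<forall>i j. i < j \<longrightarrow> S i j = 0"
    and Sb_ut: "\<forall>i. Sb i i \<noteq> 0" "\<forall>i j. j < i \<longrightarrow> Sb i j = 0"
    and factor: "mmul (mmul (W0 p1 n1 t) (gmom M w1 w2 p1 n1 p2 n2)) (minv (W0bar p2 n2 tb))
               = mmul (minv S) Sb"
  shows "\<forall>m\<ge>1.
     mpow (mmul (mmul S (Ups p1 n1)) (minv S)) m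
       = (\<lambda>i j. \<Sum>a=1..p1. mpow (mmul (mmul S (Lam p1 n1 a)) (minv S)) m i j)
   \<and> mpow (mmul (mmul S (Ups p1 n1)) (minv S)) m
       = (\<lambda>i j. \<Sum>b=1..p2. mpow (mmul (mmul Sb (mtrans (Lam p2 n2 b))) (minv Sb)) m i j)
   \<and> (\<forall>a\<in>{1..p1}. \<forall>x::real.
        mvmul (mpow (mmul (mmul S (Ups p1 n1)) (minv S)) m) (mvmul S (chi p1 n1 a x))
          = (\<lambda>i. x ^ m * mvmul S (chi p1 n1 a x) i))
   \<and> (\<forall>b\<in>{1..p2}. \<forall>x::real.
        mvmul (mtrans (mpow (mmul (mmul S (Ups p1 n1)) (minv S)) m))
              (mvmul (mtrans (minv Sb)) (chi p2 n2 b x))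
          = (\<lambda>i. x ^ m * mvmul (mtrans (minv Sb)) (chi p2 n2 b x) i))"
proof -
  interpret c1: composition p1 n1 using comp1 by unfold_locales
  interpret c2: composition p2 n2 using comp2 by unfold_locales
  have S: "lower_triangular S" "\<And>i. S i i \<noteq> 0" and Sb: "upper_triangular Sb" "\<And>i. Sb i i \<noteq> 0"
    using S_lt Sb_ut by (simp_all add: lower_triangular_def upper_triangular_def)
  note S_inv = minv_lower_triangular[OF S] and Sb_inv = minv_upper_triangular[OF Sb]
  have S_fin: "row_finite S" "row_finite (minv S)" and Sb_fin: "col_finite Sb" "col_finite (minv Sb)"
    using S S_inv Sb Sb_inv by (simp_all add: row_finite_lower_triangular col_finite_upper_triangular)
  have J: "mmul (mmul S (Ups p1 n1)) (minv S) = mmul (mmul Sb (mtrans (Ups p2 n2))) (minv Sb)"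
  proof (rule conj_eq_of_intertwine[OF _ S_inv(1) Sb_inv(1) S_fin])
    show "mmul (Ups p1 n1) (mmul (minv S) Sb) = mmul (mmul (minv S) Sb) (mtrans (Ups p2 n2))"
      by (rule Ups_intertwine_factorization[OF c1.composition_axioms c2.composition_axioms
            conv1 conv2 factor])
  qed (use Sb_fin c2.inj_next_index in \<open>simp_all add: c1.Ups_eq_shift_matrix c2.Ups_eq_shift_matrix
      row_finite_shift_matrix col_finite_iff_row_finite_mtrans\<close>)
  show ?thesis
    using c1.mpow_conj_Ups[OF S_fin S_inv(2)] c1.conj_Ups_eigenvector[OF S_fin S_inv(2)]
      c2.mpow_conj_mtrans_Ups[OF Sb_fin Sb_inv(2), folded J]
      c2.conj_mtrans_Ups_left_eigenvector[OF Sb_fin Sb_inv(2), folded J]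
    by blast
qed
end
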